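(* Let $(f_k)_{k\ge1}$ be the Fibonacci numbers ($f_1=f_2=1$, $f_{k+1}=f_k+f_{k-1}$) and $(g_k)_{k\ge1}$ the Lucas numbers ($g_1=1$, $g_2=3$, $g_{k+1}=g_k+g_{k-1}$). Then $$\sum_{k=1}^{\infty}\left[\mathcal L\left(\frac{1}{5f_{2k}^2}\right)+\mathcal L\left(\frac{1}{g_{2k+1}^2}\right)\right]=\frac{\pi^2}{15}.$$
   Context: $\mathcal L$ is the Rogers dilogarithm: for real $z\le1$, $\mathcal L(z)=\mathrm{Li}_2(z)+\tfrac12\log|z|\log(1-z)$, where $\mathrm{Li}_2(z)=\sum_{m\ge1}z^m/m^2$. *)

theory Defs
  imports "HOL-Analysis.Analysis"
begin

fun fibo :: "nat \<Rightarrow> nat" where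
  "fibo 0 = 0"
| "fibo (Suc 0) = 1"
| "fibo (Suc (Suc n)) = fibo (Suc n) + fibo n"

fun lucas :: "nat \<Rightarrow> nat" where
  "lucas 0 = 2"
| "lucas (Suc 0) = 1"
| "lucas (Suc (Suc n)) = lucas (Suc n) + lucas n"

definition Li2 :: "real \<Rightarrow> real" where
  "Li2 z = (\<Sum>m. z ^ (m + 1) / (real (m + 1))\<^sup>2)"

definition rogersL :: "real \<Rightarrow> real" where
  "rogersL z = Li2 z + (1/2) * ln \<bar>z\<bar> * ln (1 - z)"

end

theory Submission
  imports Defs "HOL-Real_Asymp.Real_Asymp"
begin

text \<open>Put \<open>q = \<phi>\<^sup>2\<close>, so that \<open>q\<^sup>2 = 3 q - 1\<close>, and \<open>T x = x / (x - 1)\<^sup>2\<close>. The closed forms of the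
  Fibonacci and Lucas numbers give \<open>1 / (5 f\<^sub>m\<^sup>2) = T (q\<^sup>m)\<close> for even \<open>m\<close> and
  \<open>1 / g\<^sub>m\<^sup>2 = T (q\<^sup>m)\<close> for odd \<open>m\<close>, so the \<open>k\<close>-th summand is
  \<open>L (T (q\<^bsup>2k+2\<^esup>)) + L (T (q\<^bsup>2k+3\<^esup>))\<close>. An instance of the five-term relation, proved by
  differentiation, reads \<open>L (T x) = H (q x) - H x\<close> with
  \<open>H x = L ((x - q) / (q (x - 1))) + L ((x - q) / (x - 1))\<close>. Hence the series telescopes to
  \<open>lim H - H (q\<^sup>2) = L (1/q) + L 1 - \<pi>\<^sup>2/6 = L (1/q)\<close>, and \<open>L (1/\<phi>\<^sup>2) = \<pi>\<^sup>2/15\<close> follows from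
  Euler's reflection formula and Abel's duplication formula.\<close>

lemma continuous_on_Li2: "continuous_on {-1..1} Li2"
proof -
  have "uniform_limit {-1..1} (\<lambda>n z. \<Sum>m<n. z ^ (m + 1) / (real (m + 1))\<^sup>2)
          (\<lambda>z. \<Sum>m. z ^ (m + 1) / (real (m + 1))\<^sup>2) sequentially"
  proof (rule Weierstrass_m_test)
    show "summable (\<lambda>m. 1 / (real (m + 1))\<^sup>2)"
      using inverse_squares_sums sums_summable by (simp add: add.commute)
    fix n :: nat and z :: real
    assume "z \<in> {-1..1}"
    then have "\<bar>z\<bar> ^ (n + 1) \<le> 1" by (intro power_le_one) auto
    then show "norm (z ^ (n + 1) / (real (n + 1))\<^sup>2) \<le> 1 / (real (n + 1))\<^sup>2"
      by (simp add: abs_mult power_abs divide_right_mono del: of_nat_Suc)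
  qed
  then have "continuous_on {-1..1} (\<lambda>z. \<Sum>m. z ^ (m + 1) / (real (m + 1))\<^sup>2)"
    by (rule uniform_limit_theorem[rotated]) (auto intro!: always_eventually continuous_intros)
  then show ?thesis
    unfolding Li2_def[abs_def] .
qed

lemma Li2_0 [simp]: "Li2 0 = 0"
  by (simp add: Li2_def)

lemma Li2_1 [simp]: "Li2 1 = pi\<^sup>2 / 6"
  using inverse_squares_sums by (simp add: Li2_def sums_iff add.commute)

lemma Li2_has_real_derivative:
  assumes "0 < z" "z < 1"
  shows "(Li2 has_real_derivative - ln (1 - z) / z) (at z)"
proof -
  define c where "c n = 1 / (real n)\<^sup>2" for n
  have Li2_power_series: "Li2 = (\<lambda>z. \<Sum>n. c n * z ^ n)"
  proof
    fix z :: real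
    have "(\<lambda>n. c (Suc n) * z ^ Suc n) sums s \<longleftrightarrow> (\<lambda>n. c n * z ^ n) sums s" for s
      using sums_Suc_iff[of "\<lambda>n. c n * z ^ n" s] by (simp add: c_def)
    then have "(\<Sum>n. c (Suc n) * z ^ Suc n) = (\<Sum>n. c n * z ^ n)"
      unfolding suminf_def by (intro arg_cong[where f=The] ext)
    then show "Li2 z = (\<Sum>n. c n * z ^ n)"
      by (simp add: Li2_def c_def field_simps)
  qed
  have "summable (\<lambda>n. c n * w ^ n)" if "norm w < 1" for w :: real
  proof (rule summable_comparison_test[OF _ summable_geometric[of "\<bar>w\<bar>"]])
    have "norm (c n * w ^ n) \<le> \<bar>w\<bar> ^ n" if "n \<ge> 1" for n
    proof -
      have "c n \<le> 1" "c n \<ge> 0" using that by (auto simp: c_def)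
      then show ?thesis by (simp add: abs_mult power_abs mult_left_le_one_le)
    qed
    then show "\<exists>N. \<forall>n\<ge>N. norm (c n * w ^ n) \<le> \<bar>w\<bar> ^ n" by blast
  qed (use that in auto)
  then have "(Li2 has_real_derivative (\<Sum>n. diffs c n * z ^ n)) (at z)"
    unfolding Li2_power_series by (intro termdiffs_strong'[of 1]) (use assms in auto)
  moreover have "(\<lambda>n. - (z ^ n) / of_nat n) sums ln (1 - z)"
    using ln_series'[of "-z"] assms by simp
  then have "(\<lambda>n. - (z ^ Suc n) / of_nat (Suc n)) sums ln (1 - z)"
    using sums_Suc_iff[of "\<lambda>n. - (z ^ n) / of_nat n"] by simp
  from sums_divide[OF this, of "-z"]
  have "(\<lambda>n. diffs c n * z ^ n) sums (- ln (1 - z) / z)"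
    using assms by (simp add: diffs_def c_def field_simps power2_eq_square del: of_nat_Suc)
  ultimately show ?thesis by (simp add: sums_iff)
qed

lemma continuous_on_rogersL: "continuous_on {0..1} rogersL"
proof -
  have "continuous_on {0..1} (\<lambda>z::real. ln \<bar>z\<bar> * ln (1 - z))"
  proof (rule continuous_on_IccI)
    show "((\<lambda>z::real. ln \<bar>z\<bar> * ln (1 - z)) \<longlongrightarrow> ln \<bar>0\<bar> * ln (1 - 0)) (at_right 0)"
      by simp real_asymp
    show "((\<lambda>z::real. ln \<bar>z\<bar> * ln (1 - z)) \<longlongrightarrow> ln \<bar>1\<bar> * ln (1 - 1)) (at_left 1)"
      by simp real_asymp
    fix x :: real
    assume "0 < x" "x < 1"
    then show "(\<lambda>z. ln \<bar>z\<bar> * ln (1 - z)) \<midarrow>x\<rightarrow> ln \<bar>x\<bar> * ln (1 - x)"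
      by (intro tendsto_intros) auto
  qed simp
  moreover have "continuous_on {0..1} Li2"
    by (rule continuous_on_subset[OF continuous_on_Li2]) auto
  ultimately have "continuous_on {0..1} (\<lambda>z. Li2 z + (1/2) * (ln \<bar>z\<bar> * ln (1 - z)))"
    by (intro continuous_on_add continuous_on_mult_left)
  then show ?thesis
    unfolding rogersL_def[abs_def] by (simp add: mult.assoc)
qed

lemma continuous_on_rogersL_comp:
  assumes "continuous_on S g" "g ` S \<subseteq> {0..1}"
  shows "continuous_on S (\<lambda>x. rogersL (g x))"
  using continuous_on_compose2[OF continuous_on_rogersL assms] .

lemma rogersL_0 [simp]: "rogersL 0 = 0"
  by (simp add: rogersL_def)

lemma rogersL_1 [simp]: "rogersL 1 = pi\<^sup>2 / 6"
  by (simp add: rogersL_def)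

lemma rogersL_has_real_derivative:
  assumes "0 < z" "z < 1"
  shows "(rogersL has_real_derivative - (ln (1 - z) / z + ln z / (1 - z)) / 2) (at z)"
proof -
  have "((\<lambda>z. Li2 z + 1/2 * ln z * ln (1 - z)) has_real_derivative
          - (ln (1 - z) / z + ln z / (1 - z)) / 2) (at z)"
    using assms by (auto intro!: derivative_eq_intros Li2_has_real_derivative simp: field_simps)
  then show ?thesis
    by (rule has_field_derivative_transform_within_open[where S="{0<..<1}"])
       (use assms in \<open>auto simp: rogersL_def\<close>)
qed

text \<open>Here \<open>P'\<close> and \<open>Q'\<close> are the logarithmic derivatives of \<open>g\<close> and \<open>1 - g\<close>. In this form the
  derivative of every functional equation below is a bilinear expression in logarithms and
  their derivatives, whose vanishing is a ring identity.\<close>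

lemma rogersL_comp_has_real_derivative:
  assumes "(g has_real_derivative g x * P') (at x)"
    and "g x * P' = - ((1 - g x) * Q')"
    and "0 < g x" "g x < 1"
    and "ln (g x) = P" "ln (1 - g x) = Q"
  shows "((\<lambda>x. rogersL (g x)) has_real_derivative (P * Q' - Q * P') / 2) (at x)"
proof -
  have "- (ln (1 - g x) / g x + ln (g x) / (1 - g x)) / 2 * (g x * P')
          = (- Q * P' - P * (g x * P') / (1 - g x)) / 2"
    using assms(3-6) by (simp add: field_simps)
  also have "P * (g x * P') / (1 - g x) = - P * Q'"
    using assms(2-4) by simp
  finally have "- (ln (1 - g x) / g x + ln (g x) / (1 - g x)) / 2 * (g x * P')
                  = (P * Q' - Q * P') / 2"
    by simp
  with DERIV_chain2[OF rogersL_has_real_derivative[OF assms(3,4)] assms(1)] show ?thesis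
    by simp
qed

lemma DERIV_isconst_end_le:
  fixes f :: "real \<Rightarrow> real"
  assumes "a \<le> b" "continuous_on {a..b} f"
    "\<And>x. a < x \<Longrightarrow> x < b \<Longrightarrow> (f has_real_derivative 0) (at x)"
  shows "f b = f a"
  using assms DERIV_isconst_end[of a b f] by (cases "a = b") auto

lemma rogersL_reflection:
  assumes "0 \<le> x" "x \<le> 1"
  shows "rogersL x + rogersL (1 - x) = pi\<^sup>2 / 6"
proof -
  let ?F = "\<lambda>x. rogersL x + rogersL (1 - x)"
  have "?F x = ?F 0"
  proof (rule DERIV_isconst_end_le[where f = ?F])
    show "continuous_on {0..x} ?F"
      using assms by (intro continuous_intros continuous_on_rogersL_comp) auto
    fix y :: real
    assume y: "0 < y" "y < x"
    have "(rogersL has_real_derivative (ln y * (-1/(1-y)) - ln (1 - y) * (1/y)) / 2) (at y)"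
      using rogersL_comp_has_real_derivative[of "\<lambda>x. x" y "1/y" "-1/(1-y)" "ln y" "ln (1 - y)"] y assms
      by (auto intro!: derivative_eq_intros simp: field_simps)
    moreover have "((\<lambda>x. rogersL (1 - x)) has_real_derivative
                     (ln (1 - y) * (1/y) - ln y * (-1/(1-y))) / 2) (at y)"
      by (rule rogersL_comp_has_real_derivative[where P'="-1/(1-y)" and Q'="1/y"])
         (use y assms in \<open>auto intro!: derivative_eq_intros simp: field_simps\<close>)
    ultimately have "(?F has_real_derivative
        (ln y * (-1/(1-y)) - ln (1 - y) * (1/y)) / 2 + (ln (1 - y) * (1/y) - ln y * (-1/(1-y))) / 2)
        (at y)"
      by (rule DERIV_add)
    then show "(?F has_real_derivative 0) (at y)"
      by (rule DERIV_cong) (simp add: field_simps)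
  qed (use assms in auto)
  then show ?thesis by simp
qed

lemma rogersL_duplication_derivative:
  assumes "0 < t" "t < 1"
  shows "((\<lambda>x. 2 * rogersL x - rogersL (x\<^sup>2) - 2 * rogersL (x / (1 + x))) has_real_derivative 0) (at t)"
proof -
  define a b c where "a = 1 / t" and "b = 1 / (1 - t)" and "c = 1 / (1 + t)"
  have d1: "(rogersL has_real_derivative (ln t * (- b) - ln (1 - t) * a) / 2) (at t)"
    by (rule rogersL_comp_has_real_derivative[where g="\<lambda>x. x"])
       (use assms in \<open>auto intro!: derivative_eq_intros simp: a_def b_def field_simps\<close>)
  have "1 - t\<^sup>2 = (1 - t) * (1 + t)"
    by (simp add: algebra_simps power2_eq_square)
  then have "ln (1 - t\<^sup>2) = ln (1 - t) + ln (1 + t)"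
    using assms by (simp add: ln_mult)
  moreover have "ln (t\<^sup>2) = 2 * ln t" "t\<^sup>2 < 1"
    using assms by (simp_all add: ln_realpow power_less_one_iff)
  ultimately have d2: "((\<lambda>x. rogersL (x\<^sup>2)) has_real_derivative
      (2 * ln t * (c - b) - (ln (1 - t) + ln (1 + t)) * (2 * a)) / 2) (at t)"
    by (intro rogersL_comp_has_real_derivative)
       (use assms in \<open>auto intro!: derivative_eq_intros
          simp: a_def b_def c_def field_simps power2_eq_square\<close>)
  have "1 - t / (1 + t) = 1 / (1 + t)"
    using assms by (simp add: field_simps)
  then have d3: "((\<lambda>x. rogersL (x / (1 + x))) has_real_derivative
      ((ln t - ln (1 + t)) * (- c) - (- ln (1 + t)) * (a - c)) / 2) (at t)"
    by (intro rogersL_comp_has_real_derivative)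
       (use assms in \<open>auto intro!: derivative_eq_intros simp: a_def c_def divide_simps ln_div\<close>)
  from DERIV_diff[OF DERIV_diff[OF DERIV_cmult[OF d1] d2] DERIV_cmult[OF d3]] show ?thesis
    by (rule DERIV_cong) (simp add: field_simps)
qed

lemma rogersL_duplication:
  assumes "0 \<le> x" "x < 1"
  shows "rogersL (x\<^sup>2) = 2 * rogersL x - 2 * rogersL (x / (1 + x))"
proof -
  let ?F = "\<lambda>x. 2 * rogersL x - rogersL (x\<^sup>2) - 2 * rogersL (x / (1 + x))"
  have "(\<lambda>y. y\<^sup>2) ` {0..x} \<subseteq> {0..1}" "(\<lambda>y. y / (1 + y)) ` {0..x} \<subseteq> {0..1}"
    using assms by (auto intro!: power_le_one)
  with assms have "continuous_on {0..x} ?F"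
    by (intro continuous_intros continuous_on_rogersL_comp) auto
  then have "?F x = ?F 0"
    using assms rogersL_duplication_derivative
    by (intro DERIV_isconst_end_le[where f = ?F]) auto
  then show ?thesis
    by simp
qed

definition \<phi> :: real where "\<phi> = (1 + sqrt 5) / 2"

definition \<psi> :: real where "\<psi> = (1 - sqrt 5) / 2"

lemma phi_gt_1: "\<phi> > 1"
  using real_less_rsqrt[of 1 5] by (simp add: \<phi>_def)

lemma phi_sq: "\<phi>\<^sup>2 = \<phi> + 1"
  by (simp add: \<phi>_def power2_eq_square field_simps)

lemma psi_sq: "\<psi>\<^sup>2 = \<psi> + 1"
  by (simp add: \<psi>_def power2_eq_square field_simps)

lemma psi_eq: "\<psi> = - 1 / \<phi>"
proof -
  have "\<phi> * \<psi> = - 1"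
    by (simp add: \<phi>_def \<psi>_def field_simps)
  with phi_gt_1 show ?thesis
    by (simp add: field_simps)
qed

lemma phi_sq_gt_1: "\<phi>\<^sup>2 > 1"
  using phi_gt_1 by (simp add: phi_sq)

lemma phi_sq_sq: "(\<phi>\<^sup>2)\<^sup>2 = 3 * \<phi>\<^sup>2 - 1"
  using phi_sq unfolding power2_eq_square by algebra

lemma rogersL_inverse_phi_sq: "rogersL (1 / \<phi>\<^sup>2) = pi\<^sup>2 / 15"
proof -
  have "(1 / \<phi>)\<^sup>2 = 1 / \<phi>\<^sup>2" "1 / \<phi> / (1 + 1 / \<phi>) = 1 / \<phi>\<^sup>2" "1 - 1 / \<phi> = 1 / \<phi>\<^sup>2"
    using phi_gt_1 phi_sq by (simp_all add: field_simps power2_eq_square)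
  moreover have "rogersL ((1 / \<phi>)\<^sup>2) = 2 * rogersL (1 / \<phi>) - 2 * rogersL (1 / \<phi> / (1 + 1 / \<phi>))"
    using phi_gt_1 by (intro rogersL_duplication) auto
  moreover have "rogersL (1 / \<phi>) + rogersL (1 - 1 / \<phi>) = pi\<^sup>2 / 6"
    using phi_gt_1 by (intro rogersL_reflection) auto
  ultimately have "rogersL (1 / \<phi>\<^sup>2) = 2 * rogersL (1 / \<phi>) - 2 * rogersL (1 / \<phi>\<^sup>2)"
    and "rogersL (1 / \<phi>) + rogersL (1 / \<phi>\<^sup>2) = pi\<^sup>2 / 6"
    by simp_all
  then show ?thesis
    by linarith
qed

lemma golden_recurrence_closed_form:
  fixes u :: "nat \<Rightarrow> real"
  assumes "\<And>n. u (Suc (Suc n)) = u (Suc n) + u n"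
    and "u 0 = a + b" and "u 1 = a * \<phi> + b * \<psi>"
  shows "u n = a * \<phi> ^ n + b * \<psi> ^ n"
proof (induction n rule: less_induct)
  case (less n)
  show ?case
  proof (cases n rule: fibo.cases)
    case (3 m)
    have "u n = (a * \<phi> ^ Suc m + b * \<psi> ^ Suc m) + (a * \<phi> ^ m + b * \<psi> ^ m)"
      using 3 less assms(1) by simp
    also have "\<dots> = a * \<phi> ^ m * (\<phi> + 1) + b * \<psi> ^ m * (\<psi> + 1)"
      by (simp add: algebra_simps)
    also have "\<dots> = a * \<phi> ^ n + b * \<psi> ^ n"
      by (simp add: 3 phi_sq[symmetric] psi_sq[symmetric] power2_eq_square)
    finally show ?thesis .
  qed (use assms in auto)
qed

lemma fibo_closed_form: "real (fibo n) = (\<phi> ^ n - \<psi> ^ n) / sqrt 5"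
  using golden_recurrence_closed_form[of "\<lambda>n. real (fibo n)" "1 / sqrt 5" "- 1 / sqrt 5" n]
  by (simp add: \<phi>_def \<psi>_def field_simps)

lemma lucas_closed_form: "real (lucas n) = \<phi> ^ n + \<psi> ^ n"
  using golden_recurrence_closed_form[of "\<lambda>n. real (lucas n)" 1 1 n]
  by (simp add: \<phi>_def \<psi>_def field_simps)

lemma inverse_sq_diff_inverse: "1 / (y - 1 / y)\<^sup>2 = y\<^sup>2 / (y\<^sup>2 - 1)\<^sup>2" for y :: real
  by (cases "y = 0") (simp_all add: field_simps power2_eq_square)

lemma fibo_even_inverse_sq:
  assumes "even m"
  shows "1 / (5 * (real (fibo m))\<^sup>2) = (\<phi>\<^sup>2) ^ m / ((\<phi>\<^sup>2) ^ m - 1)\<^sup>2"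
proof -
  have "5 * (real (fibo m))\<^sup>2 = (\<phi> ^ m - 1 / \<phi> ^ m)\<^sup>2"
    using assms by (simp add: fibo_closed_form psi_eq power_divide power_minus_even)
  then show ?thesis
    by (simp add: inverse_sq_diff_inverse power_even_eq flip: power_mult)
qed

lemma lucas_odd_inverse_sq:
  assumes "odd m"
  shows "1 / (real (lucas m))\<^sup>2 = (\<phi>\<^sup>2) ^ m / ((\<phi>\<^sup>2) ^ m - 1)\<^sup>2"
proof -
  have "real (lucas m) = \<phi> ^ m - 1 / \<phi> ^ m"
    using assms by (simp add: lucas_closed_form psi_eq power_divide power_minus_odd)
  then show ?thesis
    by (simp add: inverse_sq_diff_inverse power_even_eq flip: power_mult)
qed

lemma pred_sq_minus_self:
  fixes q x :: real
  assumes "q\<^sup>2 = 3 * q - 1" "q \<noteq> 0"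
  shows "(x - 1)\<^sup>2 - x = (x - q) * (q * x - 1) / q"
proof -
  have "(x - q) * (q * x - 1) = q * ((x - 1)\<^sup>2 - x) + (3 * q - 1 - q\<^sup>2) * x"
    by (simp add: algebra_simps power2_eq_square)
  with assms show ?thesis
    by simp
qed

lemma divide_pred_sq_bounds:
  fixes q x :: real
  assumes "q\<^sup>2 = 3 * q - 1" "1 < q" "q \<le> x"
  shows "0 < x / (x - 1)\<^sup>2" "x / (x - 1)\<^sup>2 \<le> 1" "q < x \<Longrightarrow> x / (x - 1)\<^sup>2 < 1"
proof -
  have "x > 1" "q * x > 1"
    using assms by (auto simp: less_1_mult)
  then have "0 \<le> (x - q) * (q * x - 1)" "q < x \<Longrightarrow> 0 < (x - q) * (q * x - 1)"
    using assms by auto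
  moreover have "(x - 1)\<^sup>2 - x = (x - q) * (q * x - 1) / q"
    using assms(1,2) by (intro pred_sq_minus_self) auto
  ultimately have "0 \<le> (x - 1)\<^sup>2 - x" "q < x \<Longrightarrow> 0 < (x - 1)\<^sup>2 - x"
    using assms(2) by auto
  with \<open>x > 1\<close> show "0 < x / (x - 1)\<^sup>2" "x / (x - 1)\<^sup>2 \<le> 1" "q < x \<Longrightarrow> x / (x - 1)\<^sup>2 < 1"
    by auto
qed

lemma rogersL_divide_pred_sq_has_real_derivative:
  fixes q x :: real
  assumes q: "q\<^sup>2 = 3 * q - 1" "1 < q" and "q < x"
  shows "((\<lambda>x. rogersL (x / (x - 1)\<^sup>2)) has_real_derivative
      ((ln x - 2 * ln (x - 1)) * (1 / (x - q) + q / (q * x - 1) - 2 / (x - 1))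
        - (ln (x - q) + ln (q * x - 1) - ln q - 2 * ln (x - 1)) * (1 / x - 2 / (x - 1))) / 2) (at x)"
proof (rule rogersL_comp_has_real_derivative)
  have x: "1 < x" "0 < x - q" "1 < q * x"
    using assms by (auto simp: less_1_mult)
  then have nz: "x \<noteq> 0" "x \<noteq> 1" "x \<noteq> q" "q * x \<noteq> 1" "q \<noteq> 0"
    using q by auto
  have compl: "1 - x / (x - 1)\<^sup>2 = (x - q) * (q * x - 1) / (q * (x - 1)\<^sup>2)"
    using pred_sq_minus_self[OF q(1), of x] nz by (simp add: divide_simps)
  have "(q * x - 1) * (x - 1) + q * (x - q) * (x - 1) - 2 * (x - q) * (q * x - 1)
          = q * (x + 1) + (q\<^sup>2 - 3 * q + 1) * (x + 1)"
    by (simp add: algebra_simps power2_eq_square)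
  then have "1 / (x - q) + q / (q * x - 1) - 2 / (x - 1) = q * (x + 1) / ((x - q) * (q * x - 1) * (x - 1))"
    using q(1) nz by (simp add: divide_simps) (simp add: algebra_simps)
  then show "x / (x - 1)\<^sup>2 * (1 / x - 2 / (x - 1))
      = - ((1 - x / (x - 1)\<^sup>2) * (1 / (x - q) + q / (q * x - 1) - 2 / (x - 1)))"
    unfolding compl using nz by (simp add: divide_simps power2_eq_square)
  show "((\<lambda>x. x / (x - 1)\<^sup>2) has_real_derivative x / (x - 1)\<^sup>2 * (1 / x - 2 / (x - 1))) (at x)"
    using nz by (auto intro!: derivative_eq_intros simp: divide_simps power2_eq_square)
       (simp add: algebra_simps)
  show "0 < x / (x - 1)\<^sup>2" "x / (x - 1)\<^sup>2 < 1"
    using divide_pred_sq_bounds[OF q] assms by auto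
  show "ln (x / (x - 1)\<^sup>2) = ln x - 2 * ln (x - 1)"
    using x by (simp add: ln_div ln_realpow)
  show "ln (1 - x / (x - 1)\<^sup>2) = ln (x - q) + ln (q * x - 1) - ln q - 2 * ln (x - 1)"
    unfolding compl using x q by (simp add: ln_div ln_mult ln_realpow)
qed

definition rogersH :: "real \<Rightarrow> real \<Rightarrow> real" where
  "rogersH q x = rogersL ((x - q) / (q * (x - 1))) + rogersL ((x - q) / (x - 1))"

lemma rogersH_self [simp]: "rogersH q q = 0"
  by (simp add: rogersH_def)

lemma rogersH_args_bounds:
  fixes q x :: real
  assumes "1 < q" "q \<le> x"
  shows "(x - q) / (q * (x - 1)) \<in> {0..1}" "(x - q) / (x - 1) \<in> {0..1}"
proof -
  have "x - q \<le> q * (x - 1)" "0 < q * (x - 1)"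
    using assms by (auto simp: algebra_simps)
  with assms show "(x - q) / (q * (x - 1)) \<in> {0..1}" "(x - q) / (x - 1) \<in> {0..1}"
    by auto
qed

lemma continuous_on_rogersH:
  assumes "1 < q"
  shows "continuous_on {q..} (rogersH q)"
  unfolding rogersH_def[abs_def]
  using assms rogersH_args_bounds[OF assms]
  by (intro continuous_intros continuous_on_rogersL_comp) auto

lemma rogersH_sq:
  assumes "1 < q"
  shows "rogersH q (q\<^sup>2) = pi\<^sup>2 / 6"
proof -
  have "q\<^sup>2 \<noteq> 1"
    using assms by (simp add: power2_eq_square less_1_mult[THEN less_imp_neq, symmetric])
  with assms have "(q\<^sup>2 - q) / (q * (q\<^sup>2 - 1)) = 1 / (q + 1)"
    and "(q\<^sup>2 - q) / (q\<^sup>2 - 1) = 1 - 1 / (q + 1)"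
    by (simp_all add: field_simps power2_eq_square)
  with assms show ?thesis
    by (simp add: rogersH_def rogersL_reflection)
qed

lemma tendsto_rogersH_at_top:
  assumes "1 < q"
  shows "(rogersH q \<longlongrightarrow> rogersL (1 / q) + rogersL 1) at_top"
proof -
  have "((\<lambda>x. (x - q) / (q * (x - 1))) \<longlongrightarrow> 1 / q) at_top"
    using assms by real_asymp (simp add: field_simps)
  moreover have "((\<lambda>x. (x - q) / (x - 1)) \<longlongrightarrow> 1) at_top"
    by real_asymp
  moreover have "\<forall>\<^sub>F x in at_top. (x - q) / (q * (x - 1)) \<in> {0..1}"
    "\<forall>\<^sub>F x in at_top. (x - q) / (x - 1) \<in> {0..1}"
    using eventually_ge_at_top[of q]
    by (rule eventually_mono, use rogersH_args_bounds[OF assms] in blast)+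
  ultimately show ?thesis
    unfolding rogersH_def[abs_def] using assms
    by (intro tendsto_add continuous_on_tendsto_compose[OF continuous_on_rogersL])
       (auto simp: divide_le_eq_1)
qed

lemma rogersL_div_q_pred_has_real_derivative:
  fixes q x :: real
  assumes "1 < q" "q < x"
  shows "((\<lambda>x. rogersL ((x - q) / (q * (x - 1)))) has_real_derivative
      ((ln (x - q) - ln q - ln (x - 1)) * (1 / x - 1 / (x - 1))
        - (ln (q - 1) + ln x - ln q - ln (x - 1)) * (1 / (x - q) - 1 / (x - 1))) / 2) (at x)"
proof (rule rogersL_comp_has_real_derivative)
  have x: "0 < x - q" "0 < x - 1" "0 < q - 1" "0 < x"
    using assms by auto
  have nz: "x \<noteq> 1" "x \<noteq> q" "q \<noteq> 0" "x \<noteq> 0"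
    using assms by auto
  have compl: "1 - (x - q) / (q * (x - 1)) = (q - 1) * x / (q * (x - 1))"
    using x assms by (simp add: field_simps)
  show "((\<lambda>x. (x - q) / (q * (x - 1))) has_real_derivative
      (x - q) / (q * (x - 1)) * (1 / (x - q) - 1 / (x - 1))) (at x)"
    using nz by (auto intro!: derivative_eq_intros simp: divide_simps)
      (simp add: algebra_simps power2_eq_square)
  show "(x - q) / (q * (x - 1)) * (1 / (x - q) - 1 / (x - 1))
      = - ((1 - (x - q) / (q * (x - 1))) * (1 / x - 1 / (x - 1)))"
    unfolding compl using nz by (simp add: divide_simps)
  have "x - q < q * (x - 1)"
    using assms by (simp add: algebra_simps)
  then show "0 < (x - q) / (q * (x - 1))" "(x - q) / (q * (x - 1)) < 1"
    using x assms by simp_all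
  show "ln ((x - q) / (q * (x - 1))) = ln (x - q) - ln q - ln (x - 1)"
    using x assms by (simp add: ln_div ln_mult)
  show "ln (1 - (x - q) / (q * (x - 1))) = ln (q - 1) + ln x - ln q - ln (x - 1)"
    unfolding compl using x assms by (simp add: ln_div ln_mult)
qed

lemma rogersL_div_pred_has_real_derivative:
  fixes q x :: real
  assumes "1 < q" "q < x"
  shows "((\<lambda>x. rogersL ((x - q) / (x - 1))) has_real_derivative
      ((ln (x - q) - ln (x - 1)) * (- 1 / (x - 1))
        - (ln (q - 1) - ln (x - 1)) * (1 / (x - q) - 1 / (x - 1))) / 2) (at x)"
proof (rule rogersL_comp_has_real_derivative)
  have x: "0 < x - q" "0 < x - 1" "0 < q - 1"
    using assms by auto
  have nz: "x \<noteq> 1" "x \<noteq> q"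
    using assms by auto
  have compl: "1 - (x - q) / (x - 1) = (q - 1) / (x - 1)"
    using x by (simp add: field_simps)
  show "((\<lambda>x. (x - q) / (x - 1)) has_real_derivative
      (x - q) / (x - 1) * (1 / (x - q) - 1 / (x - 1))) (at x)"
    using nz by (auto intro!: derivative_eq_intros simp: divide_simps)
  show "(x - q) / (x - 1) * (1 / (x - q) - 1 / (x - 1)) = - ((1 - (x - q) / (x - 1)) * (- 1 / (x - 1)))"
    unfolding compl using nz by (simp add: divide_simps)
  show "0 < (x - q) / (x - 1)" "(x - q) / (x - 1) < 1"
    using x assms by auto
  show "ln ((x - q) / (x - 1)) = ln (x - q) - ln (x - 1)"
    using x by (simp add: ln_div)
  show "ln (1 - (x - q) / (x - 1)) = ln (q - 1) - ln (x - 1)"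
    unfolding compl using x by (simp add: ln_div)
qed

lemma rogersH_has_real_derivative:
  fixes q x :: real
  assumes "1 < q" "q < x"
  shows "(rogersH q has_real_derivative
      ((ln (x - q) - ln q - ln (x - 1)) * (1 / x - 1 / (x - 1))
        - (ln (q - 1) + ln x - ln q - ln (x - 1)) * (1 / (x - q) - 1 / (x - 1))) / 2
      + ((ln (x - q) - ln (x - 1)) * (- 1 / (x - 1))
        - (ln (q - 1) - ln (x - 1)) * (1 / (x - q) - 1 / (x - 1))) / 2) (at x)"
  unfolding rogersH_def[abs_def]
  using DERIV_add[OF rogersL_div_q_pred_has_real_derivative[OF assms]
      rogersL_div_pred_has_real_derivative[OF assms]] .

lemma rogersL_five_term_derivative:
  fixes q t :: real
  assumes q: "q\<^sup>2 = 3 * q - 1" "1 < q" and "q < t"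
  shows "((\<lambda>x. rogersL (x / (x - 1)\<^sup>2) - rogersH q (q * x) + rogersH q x) has_real_derivative 0) (at t)"
proof -
  have t: "1 < t" "0 < t - 1" "0 < q - 1"
    using assms by auto
  have "q * 1 < q * t"
    using t q by (intro mult_strict_left_mono) auto
  then have qt: "q < q * t"
    by simp
  note dT = rogersL_divide_pred_sq_has_real_derivative[OF q assms(3)]
  note dH = rogersH_has_real_derivative[OF q(2) assms(3)]
  note dHq = DERIV_chain2[OF rogersH_has_real_derivative[OF q(2) qt] DERIV_cmult_Id]
  have "(q - 1)\<^sup>2 = q"
    using q(1) by (simp add: power2_eq_square algebra_simps)
  then have "ln q = 2 * ln (q - 1)"
    using ln_realpow[of "q - 1" 2] t by simp
  moreover have "q * t - q = q * (t - 1)"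
    by (simp add: algebra_simps)
  ultimately have logs: "ln (q * t - q) = 2 * ln (q - 1) + ln (t - 1)"
    "ln (q * t) = 2 * ln (q - 1) + ln t" "ln q = 2 * ln (q - 1)"
    using t q by (simp_all add: ln_mult)
  have nz: "t \<noteq> 0" "t \<noteq> 1" "t \<noteq> q" "q * t \<noteq> 1" "q \<noteq> 0" "q * t \<noteq> q"
    using t qt assms by (auto simp: less_1_mult[THEN less_imp_neq, symmetric])
  from DERIV_add[OF DERIV_diff[OF dT dHq] dH] show ?thesis
    by (rule DERIV_cong) (use nz in \<open>simp add: logs divide_simps\<close>, simp add: algebra_simps)
qed

lemma rogersL_five_term:
  fixes q x :: real
  assumes q: "q\<^sup>2 = 3 * q - 1" "1 < q" and "q \<le> x"
  shows "rogersL (x / (x - 1)\<^sup>2) = rogersH q (q * x) - rogersH q x"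
proof -
  let ?F = "\<lambda>x. rogersL (x / (x - 1)\<^sup>2) - rogersH q (q * x) + rogersH q x"
  have "?F x = ?F q"
  proof (rule DERIV_isconst_end_le[where f = ?F])
    have "q \<le> q * y" "y \<noteq> 1" "y / (y - 1)\<^sup>2 \<in> {0..1}" if "q \<le> y" for y
      using that q divide_pred_sq_bounds[OF q that] by (auto simp: mult_le_cancel_left1)
    then show "continuous_on {q..x} ?F"
      by (intro continuous_intros continuous_on_rogersL_comp
            continuous_on_compose2[OF continuous_on_rogersH[OF q(2)]]
            continuous_on_subset[OF continuous_on_rogersH[OF q(2)]]) auto
  qed (use assms rogersL_five_term_derivative[OF q] in auto)
  moreover have "?F q = 0"
  proof -
    have "(q - 1)\<^sup>2 = q" "q * q = q\<^sup>2"
      using q(1) by (simp_all add: power2_eq_square algebra_simps)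
    then show ?thesis
      using q(2) rogersH_sq[OF q(2)] by simp
  qed
  ultimately show ?thesis
    by simp
qed

lemma rogersL_power_five_term:
  fixes q :: real
  assumes "q\<^sup>2 = 3 * q - 1" "1 < q" "m \<ge> 1"
  shows "rogersL (q ^ m / (q ^ m - 1)\<^sup>2) = rogersH q (q ^ Suc m) - rogersH q (q ^ m)"
proof -
  have "q ^ 1 \<le> q ^ m"
    using assms by (intro power_increasing) auto
  then show ?thesis
    using rogersL_five_term[OF assms(1,2), of "q ^ m"] by simp
qed

theorem mainTheorem6:
  shows "(\<lambda>k. rogersL (1 / (5 * (real (fibo (2 * (k + 1))))\<^sup>2))
              + rogersL (1 / (real (lucas (2 * (k + 1) + 1)))\<^sup>2))
         sums (pi\<^sup>2 / 15)"
proof -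
  define G where "G k = rogersH (\<phi>\<^sup>2) ((\<phi>\<^sup>2) ^ (2 * (k + 1)))" for k
  have "1 / (5 * (real (fibo (2 * (k + 1))))\<^sup>2)
          = (\<phi>\<^sup>2) ^ (2 * (k + 1)) / ((\<phi>\<^sup>2) ^ (2 * (k + 1)) - 1)\<^sup>2"
    and "1 / (real (lucas (2 * (k + 1) + 1)))\<^sup>2
          = (\<phi>\<^sup>2) ^ (2 * (k + 1) + 1) / ((\<phi>\<^sup>2) ^ (2 * (k + 1) + 1) - 1)\<^sup>2"
    for k by (intro fibo_even_inverse_sq lucas_odd_inverse_sq; simp)+
  moreover have "Suc (2 * (k + 1)) = 2 * (k + 1) + 1" "Suc (2 * (k + 1) + 1) = 2 * (Suc k + 1)" for k
    by simp_all
  ultimately have summand: "rogersL (1 / (5 * (real (fibo (2 * (k + 1))))\<^sup>2))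
      + rogersL (1 / (real (lucas (2 * (k + 1) + 1)))\<^sup>2) = G (Suc k) - G k" for k
    using rogersL_power_five_term[OF phi_sq_sq phi_sq_gt_1, of "2 * (k + 1)"]
      rogersL_power_five_term[OF phi_sq_sq phi_sq_gt_1, of "2 * (k + 1) + 1"]
    unfolding G_def by simp
  \<comment> \<open>stated for a variable \<open>q\<close>: \<open>real_asymp\<close> cannot determine the sign of the constant \<open>\<phi>\<close>\<close>
  have "filterlim (\<lambda>k. q ^ (2 * (k + 1))) at_top sequentially" if "q > 1" for q :: real
    using that by real_asymp
  from this[OF phi_sq_gt_1] have "G \<longlonglongrightarrow> rogersL (1 / \<phi>\<^sup>2) + rogersL 1"
    unfolding G_def by (rule filterlim_compose[OF tendsto_rogersH_at_top[OF phi_sq_gt_1]])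
  then have "(\<lambda>k. G (Suc k) - G k) sums (rogersL (1 / \<phi>\<^sup>2) + rogersL 1 - G 0)"
    by (rule telescope_sums)
  moreover have "G 0 = pi\<^sup>2 / 6"
    unfolding G_def using rogersH_sq[OF phi_sq_gt_1] by simp
  ultimately show ?thesis
    unfolding summand by (simp add: rogersL_inverse_phi_sq)
qed

end
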